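(* Fix an integer precision $p\ge 1$ and let $\epsilon = 2^{-p+1}$. Suppose GDS is $k$-competitive in the following sense: for every request sequence $\tau$ in which every pair has a positive integer cost-to-size ratio, and for every way of breaking ties among pairs of smallest $H$-value, $\mathrm{GDS}(\tau)\le k\cdot \mathrm{OPT}(\tau)$. Then for every request sequence $\sigma$ in which every pair has a positive integer cost-to-size ratio, $\mathrm{CAMP}(\sigma) \le (1+\epsilon)\,k\cdot \mathrm{OPT}(\sigma)$.
   Context: Caching model: a memory of fixed capacity; each key-value pair $q$ has size $\operatorname{size}(q)>0$ and cost $\operatorname{cost}(q)>0$, each pair fits in memory by itself. Requests arrive in sequence; if the requested pair is not in memory (a miss), its cost is paid and it is brought into memory, evicting other pairs as needed so the total size of pairs in memory never exceeds capacity. For an algorithm $A$ and sequence $\sigma$, $A(\sigma)$ is the total cost paid on misses; $\mathrm{OPT}(\sigma)$ is the minimum total cost over all (offline) eviction strategies that know $\sigma$ in advance. GDS: keeps a global $L$ (initially $0$) and $H(q)$ for pairs $q$ in memory. On a request for $q$: if $q$ is in memory, $L\leftarrow\min_{r\in M\setminus\{q\}}H(r)$; otherwise, while there is not enough room for $q$, evict a pair with smallest $H$ and set $L\leftarrow \min_{r\in M}H(r)$, then bring $q$ in; finally $H(q)\leftarrow L+\operatorname{cost}(q)/\operatorname{size}(q)$. Rounding to precision $p$: for a positive integer $x$ whose highest nonzero bit is in position $b$ (positions numbered from $1$ at the lowest-order bit), $\bar x = x$ if $b\le p$, and otherwise $\bar x$ is $x$ with its $b-p$ lowest-order bits set to zero.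 CAMP with precision $p$: on sequence $\sigma$, it makes exactly the eviction decisions GDS makes (with ties among smallest $H$ broken by least-recent request) when each pair's cost-to-size ratio $x=\operatorname{cost}(q)/\operatorname{size}(q)$ is replaced by its rounded value $\bar x$; but on each miss for $q$ it pays the true cost $\operatorname{cost}(q)$. Equivalently, letting $\bar\sigma$ be $\sigma$ with each pair's cost replaced by $\operatorname{size}(q)\cdot\bar x$, CAMP's decisions on $\sigma$ coincide with those of GDS on $\bar\sigma$. *)

theory Defs
  imports Complex_Main
begin

text \<open>Offline optimum: a feasible schedule is a list of memory contents Ms with
Ms!i the memory just before the i-th request; memory starts empty, after serving
request i the requested pair is in memory, the new memory only contains pairs
of the old memory plus the requested one (no prefetching), and the capacity
is respected.\<close>

definition feasible_schedule ::
  "('q \<Rightarrow> real) \<Rightarrow> real \<Rightarrow> 'q list \<Rightarrow> 'q set list \<Rightarrow> bool" where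
  "feasible_schedule sz C \<sigma> Ms \<longleftrightarrow>
     length Ms = Suc (length \<sigma>) \<and> Ms ! 0 = {} \<and>
     (\<forall>i < length \<sigma>. \<sigma> ! i \<in> Ms ! Suc i \<and>
                       Ms ! Suc i \<subseteq> insert (\<sigma> ! i) (Ms ! i) \<and>
                       sum sz (Ms ! Suc i) \<le> C)"

definition schedule_cost ::
  "('q \<Rightarrow> real) \<Rightarrow> 'q list \<Rightarrow> 'q set list \<Rightarrow> real" where
  "schedule_cost c \<sigma> Ms = (\<Sum>i < length \<sigma>. if \<sigma> ! i \<in> Ms ! i then 0 else c (\<sigma> ! i))"

definition OPT ::
  "('q \<Rightarrow> real) \<Rightarrow> real \<Rightarrow> ('q \<Rightarrow> real) \<Rightarrow> 'q list \<Rightarrow> real" where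
  "OPT sz C c \<sigma> = Inf {schedule_cost c \<sigma> Ms | Ms. feasible_schedule sz C \<sigma> Ms}"

text \<open>A tie-breaking rule 'choose' gets the history of earlier requests, the
current memory, the current H and a candidate r; it says whether r may be evicted.
Every admissible choice must be a pair in memory of smallest H.\<close>

definition min_H :: "'q set \<Rightarrow> ('q \<Rightarrow> real) \<Rightarrow> 'q \<Rightarrow> bool" where
  "min_H M H r \<longleftrightarrow> r \<in> M \<and> (\<forall>s\<in>M. H r \<le> H s)"

definition any_tie :: "'q list \<Rightarrow> 'q set \<Rightarrow> ('q \<Rightarrow> real) \<Rightarrow> 'q \<Rightarrow> bool" where
  "any_tie hist M H r \<longleftrightarrow> min_H M H r"

definition last_req :: "'q list \<Rightarrow> 'q \<Rightarrow> nat" where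
  "last_req hist r = Max {i. i < length hist \<and> hist ! i = r}"

definition lru_tie :: "'q list \<Rightarrow> 'q set \<Rightarrow> ('q \<Rightarrow> real) \<Rightarrow> 'q \<Rightarrow> bool" where
  "lru_tie hist M H r \<longleftrightarrow> min_H M H r \<and>
     (\<forall>s\<in>M. H s = H r \<longrightarrow> last_req hist r \<le> last_req hist s)"

text \<open>Eviction loop on a miss for q: while there is not enough room for q, evict a
chosen pair r of smallest H and set L to H r (= the minimum of H over the memory
at the moment of eviction).\<close>
inductive evict_loop ::
  "('q \<Rightarrow> real) \<Rightarrow> real \<Rightarrow> ('q set \<Rightarrow> ('q \<Rightarrow> real) \<Rightarrow> 'q \<Rightarrow> bool) \<Rightarrow> 'q \<Rightarrow>
   ('q \<Rightarrow> real) \<Rightarrow> 'q set \<Rightarrow> real \<Rightarrow> 'q set \<Rightarrow> real \<Rightarrow> bool"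
  for sz C ch q H where
  stop: "sum sz M + sz q \<le> C \<Longrightarrow> evict_loop sz C ch q H M L M L"
| evict: "\<lbrakk> sum sz M + sz q > C; ch M H r;
           evict_loop sz C ch q H (M - {r}) (H r) M' L' \<rbrakk>
         \<Longrightarrow> evict_loop sz C ch q H M L M' L'"

text \<open>One request step of GDS with ratio function rho (used for H) and cost
function c (paid on misses). On a hit, L becomes the minimum of H over the other
pairs in memory (unchanged if there are none).\<close>
inductive gds_step ::
  "('q \<Rightarrow> real) \<Rightarrow> real \<Rightarrow> ('q \<Rightarrow> real) \<Rightarrow> ('q \<Rightarrow> real) \<Rightarrow>
   ('q set \<Rightarrow> ('q \<Rightarrow> real) \<Rightarrow> 'q \<Rightarrow> bool) \<Rightarrow> 'q \<Rightarrow>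
   'q set \<Rightarrow> ('q \<Rightarrow> real) \<Rightarrow> real \<Rightarrow> 'q set \<Rightarrow> ('q \<Rightarrow> real) \<Rightarrow> real \<Rightarrow> real \<Rightarrow> bool"
  for sz C rho c ch q where
  hit: "\<lbrakk> q \<in> M;
          L' = (if M - {q} = {} then L else Min (H ` (M - {q}))) \<rbrakk>
        \<Longrightarrow> gds_step sz C rho c ch q M H L M (H(q := L' + rho q)) L' 0"
| miss: "\<lbrakk> q \<notin> M; evict_loop sz C ch q H M L M' L' \<rbrakk>
        \<Longrightarrow> gds_step sz C rho c ch q M H L (insert q M') (H(q := L' + rho q)) L' (c q)"

text \<open>Execution on a prefix of the request sequence: gds_exec ... hist M H L total
means that after serving the requests hist (starting from empty memory, L = 0)
the state is (M, H, L) and the total paid cost is total.\<close>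
inductive gds_exec ::
  "('q \<Rightarrow> real) \<Rightarrow> real \<Rightarrow> ('q \<Rightarrow> real) \<Rightarrow> ('q \<Rightarrow> real) \<Rightarrow>
   ('q list \<Rightarrow> 'q set \<Rightarrow> ('q \<Rightarrow> real) \<Rightarrow> 'q \<Rightarrow> bool) \<Rightarrow>
   'q list \<Rightarrow> 'q set \<Rightarrow> ('q \<Rightarrow> real) \<Rightarrow> real \<Rightarrow> real \<Rightarrow> bool"
  for sz C rho c ch where
  init: "gds_exec sz C rho c ch [] {} (\<lambda>_. 0) 0 0"
| step: "\<lbrakk> gds_exec sz C rho c ch hist M H L tot;
           gds_step sz C rho c (ch hist) q M H L M' H' L' paid \<rbrakk>
         \<Longrightarrow> gds_exec sz C rho c ch (hist @ [q]) M' H' L' (tot + paid)"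

definition GDS_run_cost ::
  "('q \<Rightarrow> real) \<Rightarrow> real \<Rightarrow> ('q \<Rightarrow> real) \<Rightarrow>
   ('q list \<Rightarrow> 'q set \<Rightarrow> ('q \<Rightarrow> real) \<Rightarrow> 'q \<Rightarrow> bool) \<Rightarrow> 'q list \<Rightarrow> real \<Rightarrow> bool" where
  "GDS_run_cost sz C c ch \<sigma> tot \<longleftrightarrow>
     (\<exists>M H L. gds_exec sz C (\<lambda>q. c q / sz q) c ch \<sigma> M H L tot)"

text \<open>Position of the highest nonzero bit of a positive integer x (lowest bit = 1):
the least b with x < 2^b.\<close>
definition top_bit :: "nat \<Rightarrow> nat" where
  "top_bit x = (LEAST b. x < 2 ^ b)"

definition round_prec :: "nat \<Rightarrow> nat \<Rightarrow> nat" where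
  "round_prec p x = (if top_bit x \<le> p then x
                     else (x div 2 ^ (top_bit x - p)) * 2 ^ (top_bit x - p))"

definition int_ratio :: "('q \<Rightarrow> real) \<Rightarrow> ('q \<Rightarrow> real) \<Rightarrow> 'q \<Rightarrow> bool" where
  "int_ratio sz c q \<longleftrightarrow> (\<exists>n::nat. n > 0 \<and> c q / sz q = real n)"

text \<open>Rounded ratio (meaningful when int_ratio holds).\<close>
definition rounded_ratio :: "nat \<Rightarrow> ('q \<Rightarrow> real) \<Rightarrow> ('q \<Rightarrow> real) \<Rightarrow> 'q \<Rightarrow> real" where
  "rounded_ratio p sz c q = real (round_prec p (nat \<lfloor>c q / sz q\<rfloor>))"

definition CAMP_run_cost ::
  "nat \<Rightarrow> ('q \<Rightarrow> real) \<Rightarrow> real \<Rightarrow> ('q \<Rightarrow> real) \<Rightarrow> 'q list \<Rightarrow> real \<Rightarrow> bool" where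
  "CAMP_run_cost p sz C c \<sigma> tot \<longleftrightarrow>
     (\<exists>M H L. gds_exec sz C (rounded_ratio p sz c) c lru_tie \<sigma> M H L tot)"

end

theory Submission
  imports Defs
begin

text \<open>CAMP on \<open>\<sigma>\<close> makes exactly the decisions of GDS on the instance whose costs are
  \<open>sz q * round_prec p (c q / sz q)\<close>. Rounding to precision \<open>p\<close> keeps the leading \<open>p\<close> bits,
  so it loses less than a factor \<open>1 + 2 powr (1 - p)\<close>, and rounded ratios are again positive
  integers. Hence CAMP pays at most \<open>1 + 2 powr (1 - p)\<close> times what GDS pays on the rounded
  instance, which is at most \<open>k\<close> times its optimum; and rounding costs down cannot increase
  the optimum.\<close>

lemma top_bit_bounds:
  assumes "0 < n"
  shows "n < 2 ^ top_bit n" and "2 ^ (top_bit n - 1) \<le> n"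
proof -
  show below: "n < 2 ^ top_bit n"
    unfolding top_bit_def by (rule LeastI[of _ n]) simp
  have "top_bit n \<noteq> 0"
  proof
    assume "top_bit n = 0"
    with below assms show False
      by simp
  qed
  moreover have "\<not> n < 2 ^ (top_bit n - 1)"
    using Least_le[of "\<lambda>b. n < 2 ^ b" "top_bit n - 1"] \<open>top_bit n \<noteq> 0\<close>
    unfolding top_bit_def by fastforce
  ultimately show "2 ^ (top_bit n - 1) \<le> n"
    by simp
qed

lemma round_prec_le: "round_prec p n \<le> n"
  by (simp add: round_prec_def)

lemma round_prec_bounds:
  assumes "0 < n" and "1 \<le> p"
  shows "0 < round_prec p n"
    and "real n \<le> (1 + 2 powr (1 - real p)) * real (round_prec p n)"
proof -
  let ?b = "top_bit n"
  have "0 < round_prec p n \<and> real n \<le> (1 + 2 powr (1 - real p)) * real (round_prec p n)"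
  proof (cases "?b \<le> p")
    case True
    then show ?thesis
      using assms by (simp add: round_prec_def distrib_right)
  next
    case False
    define d where "d = ?b - p"
    define r where "r = n div 2 ^ d * 2 ^ d"
    have r: "round_prec p n = r"
      using False unfolding round_prec_def r_def d_def by simp
    \<comment> \<open>the leading \<open>p\<close> bits survive, and the discarded bits are worth less than \<open>2 ^ d\<close>\<close>
    have "2 ^ (p - 1) * 2 ^ d \<le> n"
      using top_bit_bounds(2)[OF assms(1)] False assms(2)
      by (simp add: d_def flip: power_add)
    then have lead: "2 ^ (p - 1) * 2 ^ d \<le> r"
      by (simp add: r_def less_eq_div_iff_mult_less_eq)
    then have "real (2 ^ (p - 1) * 2 ^ d) \<le> real r"
      by (simp only: of_nat_le_iff)
    then have lead_real: "(2::real) ^ (p - 1) * 2 ^ d \<le> real r"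
      by simp
    have "n mod 2 ^ d < 2 ^ d"
      by simp
    then have "n < r + 2 ^ d"
      using div_mult_mod_eq[of n "2 ^ d"] unfolding r_def by linarith
    then have "real n < real r + real (2 ^ d)"
      by linarith
    also have "real (2 ^ d) = (2::real) ^ d"
      by simp
    also have "(2::real) ^ d = 2 powr (1 - real p) * (2 ^ (p - 1) * 2 ^ d)"
      using assms(2) by (simp add: powr_realpow[symmetric] of_nat_diff mult.assoc[symmetric]
          flip: powr_add)
    also have "\<dots> \<le> 2 powr (1 - real p) * real r"
      using lead_real by (intro mult_left_mono) simp_all
    finally have "real n \<le> (1 + 2 powr (1 - real p)) * real r"
      by (simp add: distrib_right)
    moreover have "0 < r"
      using lead by (rule less_le_trans[rotated]) simp
    ultimately show ?thesis
      using r by simp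
  qed
  then show "0 < round_prec p n" and "real n \<le> (1 + 2 powr (1 - real p)) * real (round_prec p n)"
    by auto
qed

definition rounded_cost :: "nat \<Rightarrow> ('q \<Rightarrow> real) \<Rightarrow> ('q \<Rightarrow> real) \<Rightarrow> 'q \<Rightarrow> real" where
  "rounded_cost p sz c q = (if int_ratio sz c q then sz q * rounded_ratio p sz c q else c q)"

lemma rounded_cost_props:
  assumes "0 < sz q" and "0 < c q" and "1 \<le> p"
  shows "0 < rounded_cost p sz c q"
    and "rounded_cost p sz c q \<le> c q"
    and "int_ratio sz c q \<Longrightarrow> rounded_cost p sz c q / sz q = rounded_ratio p sz c q"
    and "int_ratio sz c q \<Longrightarrow> int_ratio sz (rounded_cost p sz c) q"
    and "int_ratio sz c q \<Longrightarrow> c q \<le> (1 + 2 powr (1 - real p)) * rounded_cost p sz c q"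
proof -
  have "0 < rounded_cost p sz c q \<and> rounded_cost p sz c q \<le> c q"
  proof (cases "int_ratio sz c q")
    case True
    then obtain n :: nat where n: "0 < n" "c q / sz q = real n"
      unfolding int_ratio_def by blast
    then have "rounded_cost p sz c q = sz q * real (round_prec p n)"
      using True by (simp add: rounded_cost_def rounded_ratio_def)
    moreover have "c q = sz q * real n"
      using n(2) assms(1) by (simp add: field_simps)
    ultimately show ?thesis
      using round_prec_bounds(1)[OF n(1) assms(3)] round_prec_le[of p n] assms(1) by simp
  qed (use assms in \<open>simp add: rounded_cost_def\<close>)
  then show "0 < rounded_cost p sz c q" and "rounded_cost p sz c q \<le> c q"
    by auto
next
  assume "int_ratio sz c q"
  then obtain n :: nat where n: "0 < n" "c q / sz q = real n"
    unfolding int_ratio_def by blast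
  have cost: "rounded_cost p sz c q = sz q * real (round_prec p n)"
    using \<open>int_ratio sz c q\<close> n by (simp add: rounded_cost_def rounded_ratio_def)
  show ratio: "rounded_cost p sz c q / sz q = rounded_ratio p sz c q"
    using cost n(2) assms(1) by (simp add: rounded_ratio_def)
  show "int_ratio sz (rounded_cost p sz c) q"
    using cost assms(1) round_prec_bounds(1)[OF n(1) assms(3)]
    unfolding int_ratio_def by (intro exI[of _ "round_prec p n"]) simp
  have "c q = sz q * real n"
    using n(2) assms(1) by (simp add: field_simps)
  also have "\<dots> \<le> sz q * ((1 + 2 powr (1 - real p)) * real (round_prec p n))"
    using round_prec_bounds(2)[OF n(1) assms(3)] assms(1) by (simp add: mult_left_mono)
  finally show "c q \<le> (1 + 2 powr (1 - real p)) * rounded_cost p sz c q"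
    by (simp add: cost algebra_simps)
qed

lemma gds_step_paid:
  "gds_step sz C rho c ch q M H L M' H' L' paid \<Longrightarrow> paid = (if q \<in> M then 0 else c q)"
  by (induction rule: gds_step.induct) simp_all

text \<open>The decisions of GDS on a request depend on the costs only through the ratio of the
  requested pair.\<close>

lemma gds_step_change_cost:
  assumes "gds_step sz C rho c ch q M H L M' H' L' paid" and "rho q = rho' q"
  shows "gds_step sz C rho' c' ch q M H L M' H' L' (if q \<in> M then 0 else c' q)"
  using assms by (induction rule: gds_step.induct) (metis gds_step.hit gds_step.miss)+

lemma gds_exec_change_cost:
  assumes "gds_exec sz C rho c ch hist M H L tot"
    and "\<forall>q \<in> set hist. rho q = rho' q \<and> c q \<le> e * c' q"
  shows "\<exists>tot'. gds_exec sz C rho' c' ch hist M H L tot' \<and> tot \<le> e * tot'"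
  using assms
proof (induction rule: gds_exec.induct)
  case init
  show ?case
    by (auto intro: gds_exec.init)
next
  case (step hist M H L tot q M' H' L' paid)
  then obtain tot' where run: "gds_exec sz C rho' c' ch hist M H L tot'" and "tot \<le> e * tot'"
    by auto
  moreover have "paid \<le> e * (if q \<in> M then 0 else c' q)"
    using gds_step_paid[OF step.hyps(2)] step.prems by auto
  moreover note gds_exec.step[OF run gds_step_change_cost[OF step.hyps(2)]]
  ultimately show ?case
    using step.prems by (fastforce simp: algebra_simps)
qed

lemma gds_exec_Nil:
  assumes "gds_exec sz C rho c ch [] M H L tot"
  shows "M = {} \<and> tot = 0"
  using assms by (cases rule: gds_exec.cases) auto

text \<open>The first request of a run is always a miss.\<close>

lemma gds_exec_cost_pos:
  assumes "gds_exec sz C rho c ch hist M H L tot" and "hist \<noteq> []" and "\<forall>q. 0 < c q"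
  shows "0 < tot"
  using assms
proof (induction rule: gds_exec.induct)
  case (step hist M H L tot q M' H' L' paid)
  have paid: "paid = (if q \<in> M then 0 else c q)"
    using gds_step_paid[OF step.hyps(2)] .
  show ?case
  proof (cases "hist = []")
    case True
    then show ?thesis
      using gds_exec_Nil step.hyps(1) paid step.prems by force
  next
    case False
    then show ?thesis
      using step paid by (simp add: add_pos_nonneg less_imp_le)
  qed
qed simp

lemma feasible_schedule_singletons:
  "\<forall>q. sz q \<le> C \<Longrightarrow> feasible_schedule sz C \<sigma> ({} # map (\<lambda>q. {q}) \<sigma>)"
  unfolding feasible_schedule_def by auto

lemma schedule_cost_nonneg: "\<forall>q. 0 \<le> c q \<Longrightarrow> 0 \<le> schedule_cost c \<sigma> Ms"
  unfolding schedule_cost_def by (auto intro!: sum_nonneg)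

lemma OPT_nonneg:
  assumes "\<forall>q. sz q \<le> C" and "\<forall>q. 0 \<le> c q"
  shows "0 \<le> OPT sz C c \<sigma>"
  unfolding OPT_def
  using feasible_schedule_singletons[OF assms(1)] schedule_cost_nonneg[OF assms(2)]
  by (intro cInf_greatest) auto

lemma OPT_mono:
  assumes "\<forall>q. sz q \<le> C" and "\<forall>q. 0 \<le> c q" and "\<forall>q. c q \<le> c' q"
  shows "OPT sz C c \<sigma> \<le> OPT sz C c' \<sigma>"
  unfolding OPT_def
proof (rule cInf_mono)
  show "{schedule_cost c' \<sigma> Ms |Ms. feasible_schedule sz C \<sigma> Ms} \<noteq> {}"
    using feasible_schedule_singletons[OF assms(1)] by blast
  show "bdd_below {schedule_cost c \<sigma> Ms |Ms. feasible_schedule sz C \<sigma> Ms}"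
    using schedule_cost_nonneg[OF assms(2)] unfolding bdd_below_def by blast
  fix x
  assume "x \<in> {schedule_cost c' \<sigma> Ms |Ms. feasible_schedule sz C \<sigma> Ms}"
  then obtain Ms where "x = schedule_cost c' \<sigma> Ms" "feasible_schedule sz C \<sigma> Ms"
    by blast
  moreover have "schedule_cost c \<sigma> Ms \<le> schedule_cost c' \<sigma> Ms"
    unfolding schedule_cost_def using assms(3) by (auto intro!: sum_mono)
  ultimately show "\<exists>y \<in> {schedule_cost c \<sigma> Ms |Ms. feasible_schedule sz C \<sigma> Ms}. y \<le> x"
    by blast
qed

lemma OPT_Nil: "OPT sz C c [] = 0"
proof -
  have "feasible_schedule sz C [] [{}]"
    by (simp add: feasible_schedule_def)
  then have "{schedule_cost c [] Ms |Ms. feasible_schedule sz C [] Ms} = {0}"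
    by (auto simp: schedule_cost_def)
  then show ?thesis
    by (simp add: OPT_def)
qed

lemma CAMP_run_as_GDS_run:
  assumes "\<forall>q. 0 < sz q" and "\<forall>q. 0 < c q" and "1 \<le> p"
    and "\<forall>q \<in> set \<sigma>. int_ratio sz c q" and "CAMP_run_cost p sz C c \<sigma> tot"
  shows "\<exists>tot'. GDS_run_cost sz C (rounded_cost p sz c) lru_tie \<sigma> tot' \<and>
    tot \<le> (1 + 2 powr (1 - real p)) * tot'"
proof -
  let ?c' = "rounded_cost p sz c"
  note c' = rounded_cost_props[of sz q c p for q, OF spec[OF assms(1)] spec[OF assms(2)] assms(3)]
  from assms(5) obtain M H L where camp: "gds_exec sz C (rounded_ratio p sz c) c lru_tie \<sigma> M H L tot"
    unfolding CAMP_run_cost_def by blast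
  have "\<forall>q \<in> set \<sigma>. rounded_ratio p sz c q = ?c' q / sz q \<and>
      c q \<le> (1 + 2 powr (1 - real p)) * ?c' q"
    using assms(4) c'(3,5) by simp
  from gds_exec_change_cost[OF camp this] show ?thesis
    unfolding GDS_run_cost_def by blast
qed

theorem mainTheorem3:
  fixes sz :: "'q \<Rightarrow> real" and C :: real and c :: "'q \<Rightarrow> real"
    and p :: nat and k :: real and \<sigma> :: "'q list" and tot :: real
  assumes size_pos: "\<forall>q. 0 < sz q"
    and fits: "\<forall>q. sz q \<le> C"
    and cost_pos: "\<forall>q. 0 < c q"
    and p_pos: "1 \<le> p"
    and competitive:
      "\<forall>c' (\<tau> :: 'q list) ch t.
         (\<forall>q. 0 < c' q) \<longrightarrow> (\<forall>q \<in> set \<tau>. int_ratio sz c' q) \<longrightarrow>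
         (\<forall>hist M H r. ch hist M H r \<longrightarrow> min_H M H r) \<longrightarrow>
         GDS_run_cost sz C c' ch \<tau> t \<longrightarrow> t \<le> k * OPT sz C c' \<tau>"
    and sigma_int: "\<forall>q \<in> set \<sigma>. int_ratio sz c q"
    and camp: "CAMP_run_cost p sz C c \<sigma> tot"
  shows "tot \<le> (1 + 2 powr (1 - real p)) * k * OPT sz C c \<sigma>"
proof (cases "\<sigma> = []")
  case True
  with camp show ?thesis
    by (auto simp: CAMP_run_cost_def OPT_Nil dest: gds_exec_Nil)
next
  case False
  define c' where "c' = rounded_cost p sz c"
  note c' = rounded_cost_props[of sz q c p for q, OF spec[OF size_pos] spec[OF cost_pos] p_pos,
      folded c'_def]
  obtain tot' where run: "GDS_run_cost sz C c' lru_tie \<sigma> tot'"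
    and camp_le: "tot \<le> (1 + 2 powr (1 - real p)) * tot'"
    using CAMP_run_as_GDS_run[OF size_pos cost_pos p_pos sigma_int camp] unfolding c'_def by blast
  moreover have "\<forall>q. 0 < c' q" and "\<forall>q \<in> set \<sigma>. int_ratio sz c' q"
    using c'(1,4) sigma_int by blast+
  moreover have "\<forall>hist M H r. lru_tie hist M H r \<longrightarrow> min_H M H r"
    by (simp add: lru_tie_def)
  ultimately have gds_le: "tot' \<le> k * OPT sz C c' \<sigma>"
    using competitive by blast
  have "0 < tot'"
    using run gds_exec_cost_pos[OF _ False] c'(1) unfolding GDS_run_cost_def by blast
  moreover have "0 \<le> OPT sz C c' \<sigma>"
    using OPT_nonneg fits c'(1) less_imp_le by blast
  ultimately have "0 < k"
    using gds_le by (smt (verit) mult_nonpos_nonneg)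
  moreover have "OPT sz C c' \<sigma> \<le> OPT sz C c \<sigma>"
    using OPT_mono fits c'(1,2) less_imp_le by blast
  ultimately have "tot' \<le> k * OPT sz C c \<sigma>"
    using gds_le by (meson mult_left_mono order_trans less_imp_le)
  with camp_le show ?thesis
    by (smt (verit) mult.assoc mult_left_mono powr_ge_zero)
qed

end
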